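(* Let $n,m\in\mathbb{N}$ and $f:\mathbb{F}_2^n\to\mathbb{F}_2$. Then for every $\mathbf{z}\in\mathbb{F}_2^n$, $$C^{(m)}_f(\mathbf{z})=\zeta_m^{wt(\mathbf{z})}\sum_{\mathbf{u}\in\mathbb{F}_2^n}\left|\mathcal{H}^{(m)}_f(\mathbf{u})\right|^2(-1)^{\mathbf{u}\cdot\mathbf{z}}.$$
   Context: $\zeta_m=e^{2\pi i/m}$; $wt$ is Hamming weight; $\mathbf{x}\cdot\mathbf{y}=\bigoplus_i x_iy_i\in\mathbb{F}_2$; $\mathbf{x}\odot\mathbf{y}=\sum_i x_iy_i$ computed in the integers. The $m$-Hadamard transform is $\mathcal{H}^{(m)}_f(\boldsymbol{\omega})=2^{-n/2}\sum_{\mathbf{x}\in\mathbb{F}_2^n}(-1)^{f(\mathbf{x})\oplus\mathbf{x}\cdot\boldsymbol{\omega}}\zeta_m^{wt(\mathbf{x})}$, and the $m$-autocorrelation is $C^{(m)}_{f}(\mathbf{y})=\sum_{\mathbf{x}\in\mathbb{F}_2^n}(-1)^{f(\mathbf{x})\oplus f(\mathbf{x}\oplus\mathbf{y})}(\zeta_m^2)^{\mathbf{x}\odot\mathbf{y}}$. *)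

theory Defs
  imports Complex_Main
begin

text \<open>Vectors of F_2^n are represented as boolean lists of length n
  (True = 1, False = 0).\<close>

definition vecs :: "nat \<Rightarrow> bool list set" where
  "vecs n = {x. length x = n}"

definition wt :: "bool list \<Rightarrow> nat" where
  "wt x = length (filter id x)"

definition xorv :: "bool list \<Rightarrow> bool list \<Rightarrow> bool list" where
  "xorv x y = map2 (\<noteq>) x y"

definition dotF2 :: "bool list \<Rightarrow> bool list \<Rightarrow> bool" where
  "dotF2 x y = odd (length (filter id (map2 (\<and>) x y)))"

definition dotZ :: "bool list \<Rightarrow> bool list \<Rightarrow> nat" where
  "dotZ x y = length (filter id (map2 (\<and>) x y))"

definition sgnb :: "bool \<Rightarrow> complex" where
  "sgnb b = (if b then -1 else 1)"

definition zeta :: "nat \<Rightarrow> complex" where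
  "zeta m = exp (2 * of_real pi * \<i> / of_nat m)"

definition mHadamard :: "nat \<Rightarrow> nat \<Rightarrow> (bool list \<Rightarrow> bool) \<Rightarrow> bool list \<Rightarrow> complex" where
  "mHadamard m n f w = of_real (1 / sqrt (2 ^ n)) *
     (\<Sum>x\<in>vecs n. sgnb (f x \<noteq> dotF2 x w) * zeta m ^ wt x)"

definition mAutocorr :: "nat \<Rightarrow> nat \<Rightarrow> (bool list \<Rightarrow> bool) \<Rightarrow> bool list \<Rightarrow> complex" where
  "mAutocorr m n f y = (\<Sum>x\<in>vecs n. sgnb (f x \<noteq> f (xorv x y)) * (zeta m ^ 2) ^ dotZ x y)"

end

theory Submission
  imports Defs
begin

text \<open>With \<open>g x = (-1)^f(x) \<zeta>^wt(x)\<close>, the \<open>m\<close>-Hadamard transform is \<open>2^(-n/2)\<close> times the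
  Walsh transform of \<open>g\<close>. By orthogonality of the characters \<open>u \<mapsto> (-1)^(x\<cdot>u)\<close>, the Walsh
  transform satisfies a Wiener--Khinchin identity, which turns the right-hand side into
  \<open>\<zeta>^wt(z) \<Sum>\<^sub>x g(x) cnj (g (x \<oplus> z))\<close>. As \<open>|\<zeta>| = 1\<close> and \<open>wt x + wt z = wt (x \<oplus> z) + 2 (x \<odot> z)\<close>,
  each summand is \<open>(-1)^(f(x) \<oplus> f(x \<oplus> z)) \<zeta>^(2 (x \<odot> z))\<close>.\<close>

lemma sgnb_neq: "sgnb (a \<noteq> b) = sgnb a * sgnb b"
  by (simp add: sgnb_def)

lemma cnj_sgnb [simp]: "cnj (sgnb b) = sgnb b"
  by (simp add: sgnb_def)

lemma finite_vecs [simp]: "finite (vecs n)"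
proof -
  have "vecs n \<subseteq> {xs. set xs \<subseteq> UNIV \<and> length xs = n}"
    by (auto simp: vecs_def)
  then show ?thesis
    using finite_lists_length_eq[of "UNIV :: bool set" n] finite_subset by auto
qed

lemma vecs_Suc: "vecs (Suc n) = (\<lambda>(b, u). b # u) ` (UNIV \<times> vecs n)"
  by (auto simp: vecs_def length_Suc_conv image_iff)

lemma sum_vecs_Suc:
  "(\<Sum>u\<in>vecs (Suc n). g u) = (\<Sum>u\<in>vecs n. g (True # u)) + (\<Sum>u\<in>vecs n. g (False # u))"
proof -
  have "(\<Sum>u\<in>vecs (Suc n). g u) = (\<Sum>(b, u)\<in>UNIV \<times> vecs n. g (b # u))"
    unfolding vecs_Suc by (subst sum.reindex) (auto simp: inj_on_def case_prod_beta)
  also have "\<dots> = (\<Sum>b\<in>UNIV. \<Sum>u\<in>vecs n. g (b # u))"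
    by (simp add: sum.cartesian_product)
  finally show ?thesis
    by (simp add: UNIV_bool add.commute)
qed

lemma xorv_in_vecs: "x \<in> vecs n \<Longrightarrow> z \<in> vecs n \<Longrightarrow> xorv x z \<in> vecs n"
  by (simp add: vecs_def xorv_def)

lemma dotF2_Nil [simp]: "dotF2 [] u = False" "dotF2 x [] = False"
  by (simp_all add: dotF2_def)

lemma dotF2_Cons: "dotF2 (a # x) (b # u) = ((a \<and> b) \<noteq> dotF2 x u)"
  by (cases a; cases b) (simp_all add: dotF2_def)

lemma dotF2_commute: "dotF2 x u = dotF2 u x"
proof (induction x arbitrary: u)
  case Nil
  then show ?case by simp
next
  case (Cons a x)
  then show ?case by (cases u) (auto simp: dotF2_Cons)
qed

lemma xorv_Cons: "xorv (a # x) (b # z) = (a \<noteq> b) # xorv x z"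
  by (simp add: xorv_def)

lemma dotF2_xorv:
  "length x = length z \<Longrightarrow> dotF2 (xorv x z) u = (dotF2 x u \<noteq> dotF2 z u)"
proof (induction x z arbitrary: u rule: list_induct2)
  case Nil
  then show ?case by (simp add: xorv_def)
next
  case (Cons a x b z)
  then show ?case by (cases u) (auto simp: dotF2_Cons xorv_Cons)
qed

lemma sum_sgnb_dotF2_orthogonal:
  assumes "v \<in> vecs n" "w \<in> vecs n"
  shows "(\<Sum>u\<in>vecs n. sgnb (dotF2 v u) * sgnb (dotF2 w u)) = (if v = w then 2 ^ n else 0)"
  using assms
proof (induction n arbitrary: v w)
  case 0
  then show ?case by (simp add: vecs_def dotF2_def sgnb_def)
next
  case (Suc n)
  then obtain a v' b w' where vw: "v = a # v'" "w = b # w'" "v' \<in> vecs n" "w' \<in> vecs n"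
    by (auto simp: vecs_def length_Suc_conv)
  have "(\<Sum>u\<in>vecs (Suc n). sgnb (dotF2 v u) * sgnb (dotF2 w u))
      = (1 + sgnb a * sgnb b) * (\<Sum>u\<in>vecs n. sgnb (dotF2 v' u) * sgnb (dotF2 w' u))"
    unfolding sum_vecs_Suc vw dotF2_Cons sgnb_neq
    by (cases a; cases b) (simp_all add: sgnb_def sum_negf)
  then show ?case
    using Suc.IH[OF vw(3,4)] vw by (cases a; cases b) (auto simp: sgnb_def)
qed

lemma sum_sgnb_dotF2_triple:
  assumes "x \<in> vecs n" "y \<in> vecs n" "z \<in> vecs n"
  shows "(\<Sum>u\<in>vecs n. sgnb (dotF2 x u) * sgnb (dotF2 y u) * sgnb (dotF2 u z))
    = (if xorv x z = y then 2 ^ n else 0)"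
proof -
  have "length x = length z"
    using assms by (simp add: vecs_def)
  then have "(\<Sum>u\<in>vecs n. sgnb (dotF2 x u) * sgnb (dotF2 y u) * sgnb (dotF2 u z))
      = (\<Sum>u\<in>vecs n. sgnb (dotF2 (xorv x z) u) * sgnb (dotF2 y u))"
    by (simp only: dotF2_xorv dotF2_commute[of _ z] sgnb_neq mult_ac)
  also have "\<dots> = (if xorv x z = y then 2 ^ n else 0)"
    using assms by (simp add: sum_sgnb_dotF2_orthogonal xorv_in_vecs)
  finally show ?thesis .
qed

definition walsh :: "nat \<Rightarrow> (bool list \<Rightarrow> complex) \<Rightarrow> bool list \<Rightarrow> complex" where
  "walsh n g u = (\<Sum>x\<in>vecs n. g x * sgnb (dotF2 x u))"

theorem walsh_wiener_khinchin:
  assumes "z \<in> vecs n"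
  shows "(\<Sum>u\<in>vecs n. walsh n g u * cnj (walsh n g u) * sgnb (dotF2 u z))
    = 2 ^ n * (\<Sum>x\<in>vecs n. g x * cnj (g (xorv x z)))"
proof -
  define \<chi> where "\<chi> x y u = sgnb (dotF2 x u) * sgnb (dotF2 y u) * sgnb (dotF2 u z)" for x y u
  have "(\<Sum>u\<in>vecs n. walsh n g u * cnj (walsh n g u) * sgnb (dotF2 u z))
      = (\<Sum>u\<in>vecs n. \<Sum>x\<in>vecs n. \<Sum>y\<in>vecs n. g x * cnj (g y) * \<chi> x y u)"
    unfolding walsh_def cnj_sum sum_product
    unfolding sum_distrib_right
    by (intro sum.cong refl) (simp add: \<chi>_def mult_ac)
  also have "\<dots> = (\<Sum>x\<in>vecs n. \<Sum>y\<in>vecs n. \<Sum>u\<in>vecs n. g x * cnj (g y) * \<chi> x y u)"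
    by (subst sum.swap) (rule sum.cong[OF refl], rule sum.swap)
  also have "\<dots> = (\<Sum>x\<in>vecs n. \<Sum>y\<in>vecs n. if xorv x z = y then g x * cnj (g y) * 2 ^ n else 0)"
    using assms unfolding \<chi>_def sum_distrib_left[symmetric]
    by (intro sum.cong refl) (simp add: sum_sgnb_dotF2_triple)
  also have "\<dots> = (\<Sum>x\<in>vecs n. g x * cnj (g (xorv x z)) * 2 ^ n)"
    using assms by (intro sum.cong refl) (simp add: sum.delta' xorv_in_vecs)
  finally show ?thesis
    by (simp add: sum_distrib_left mult_ac)
qed

lemma wt_add_eq_wt_xorv: "length x = length z \<Longrightarrow> wt x + wt z = wt (xorv x z) + 2 * dotZ x z"
  by (induction x z rule: list_induct2) (auto simp: wt_def xorv_def dotZ_def)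

lemma unimodular_pow_wt_xorv:
  fixes w :: complex
  assumes "norm w = 1" "length x = length z"
  shows "w ^ wt z * w ^ wt x * cnj w ^ wt (xorv x z) = (w ^ 2) ^ dotZ x z"
proof -
  have "w ^ wt z * w ^ wt x = w ^ (wt x + wt z)"
    by (simp add: power_add)
  also have "\<dots> = w ^ wt (xorv x z) * (w ^ 2) ^ dotZ x z"
    by (simp add: wt_add_eq_wt_xorv[OF assms(2)] power_add power_mult)
  finally have "w ^ wt z * w ^ wt x * cnj w ^ wt (xorv x z)
      = (w * cnj w) ^ wt (xorv x z) * (w ^ 2) ^ dotZ x z"
    by (simp add: power_mult_distrib mult_ac)
  also have "w * cnj w = 1"
    using assms(1) complex_norm_square[of w] by simp
  finally show ?thesis
    by simp
qed

lemma norm_zeta: "norm (zeta m) = 1"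
  by (simp add: zeta_def norm_exp_eq_Re)

lemma mHadamard_eq_walsh:
  "mHadamard m n f u = of_real (1 / sqrt (2 ^ n)) * walsh n (\<lambda>x. sgnb (f x) * zeta m ^ wt x) u"
  unfolding mHadamard_def walsh_def sgnb_neq by (simp add: mult_ac)

lemma mHadamard_square_eq_walsh:
  "(of_real (cmod (mHadamard m n f u)))\<^sup>2 = walsh n g u * cnj (walsh n g u) / 2 ^ n"
  if "g = (\<lambda>x. sgnb (f x) * zeta m ^ wt x)"
proof -
  have "(of_real (cmod (mHadamard m n f u)))\<^sup>2 = mHadamard m n f u * cnj (mHadamard m n f u)"
    using complex_norm_square[of "mHadamard m n f u"] by simp
  also have "\<dots> = of_real (1 / sqrt (2 ^ n)) * of_real (1 / sqrt (2 ^ n))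
      * (walsh n g u * cnj (walsh n g u))"
    unfolding mHadamard_eq_walsh that[symmetric]
    by (simp only: complex_cnj_mult complex_cnj_complex_of_real mult_ac)
  also have "of_real (1 / sqrt (2 ^ n)) * of_real (1 / sqrt (2 ^ n)) = (1 / 2 ^ n :: complex)"
    by (simp flip: of_real_mult)
  finally show ?thesis
    by simp
qed

theorem corollary1:
  fixes n m :: nat and f :: "bool list \<Rightarrow> bool" and z :: "bool list"
  assumes "z \<in> vecs n"
  shows "mAutocorr m n f z =
    zeta m ^ wt z * (\<Sum>u\<in>vecs n. (of_real (cmod (mHadamard m n f u)))\<^sup>2 * sgnb (dotF2 u z))"
proof -
  define g where "g = (\<lambda>x. sgnb (f x) * zeta m ^ wt x)"
  have "(\<Sum>u\<in>vecs n. (of_real (cmod (mHadamard m n f u)))\<^sup>2 * sgnb (dotF2 u z))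
      = (\<Sum>x\<in>vecs n. g x * cnj (g (xorv x z)))"
    using walsh_wiener_khinchin[OF assms, of g]
    by (simp add: mHadamard_square_eq_walsh[OF g_def] flip: sum_divide_distrib)
  moreover have "sgnb (f x \<noteq> f (xorv x z)) * (zeta m ^ 2) ^ dotZ x z
      = zeta m ^ wt z * (g x * cnj (g (xorv x z)))" if "x \<in> vecs n" for x
    using that assms unimodular_pow_wt_xorv[OF norm_zeta, of x z] unfolding sgnb_neq
    by (simp add: g_def vecs_def mult_ac)
  then have "mAutocorr m n f z = (\<Sum>x\<in>vecs n. zeta m ^ wt z * (g x * cnj (g (xorv x z))))"
    unfolding mAutocorr_def by (rule sum.cong[OF refl])
  ultimately show ?thesis
    by (simp add: sum_distrib_left)
qed

end
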